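(* Let $F$ be a maximal triangle-free graph and let $G$ be a triangle-free graph having the $F$-twin property. Let $H$ be a subgraph of $G$ isomorphic to $F$, let $z\in V(H)$ and let $z'\in V(G)\setminus V(H)$ be an $H$-twin of $z$, and set $H'=H(z')$. If a vertex $q'\in V(G)$ is an $H'$-twin of some $q\in V(H)\setminus\{z\}$, then $q'$ is also an $H$-twin of $q$.
   Context: $\mathrm N(v)$ denotes the neighbourhood of $v$ in $G$. For a subgraph $H$ of $G$, $q\in V(H)$ and $q'\in V(G)$, $q'$ is an $H$-twin of $q$ if $\mathrm N(q)\cap V(H)=\mathrm N(q')\cap V(H)$. For $q'\notin V(H)$ an $H$-twin of $q\in V(H)$, $H(q')$ denotes the graph obtained from $H$ by deleting $q$ and adding $q'$ together with all edges of $G$ between $q'$ and $V(H)\setminus\{q\}$ (this graph is isomorphic to $H$). For graphs $F,G$ and $e\in E(F)$, $G$ has the $(F,e)$-twin property if whenever $H\subseteq G$ is a subgraph isomorphic to $F$, $qz\in E(H)$ corresponds to $e$ under some isomorphism, and $q',z'\in V(G)$ are $H$-twins of $q,z$ respectively, then $q'z'\in E(G)$. $G$ has the $F$-twin property if it has the $(F,e)$-twin property for every $e\in E(F)$. A graph is maximal triangle-free if it contains no triangle but adding any new edge creates a triangle. *)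

theory Defs
  imports Main
begin

text \<open>A (finite simple) graph is a pair of a vertex set and a symmetric,
irreflexive edge relation on it (edges stored as ordered pairs, both orientations).\<close>

type_synonym 'a graph = "'a set \<times> ('a \<times> 'a) set"

abbreviation verts :: "'a graph \<Rightarrow> 'a set" where "verts G \<equiv> fst G"
abbreviation edges :: "'a graph \<Rightarrow> ('a \<times> 'a) set" where "edges G \<equiv> snd G"

definition wf_graph :: "'a graph \<Rightarrow> bool" where
  "wf_graph G \<longleftrightarrow> finite (verts G) \<and> edges G \<subseteq> verts G \<times> verts G
     \<and> sym (edges G) \<and> irrefl (edges G)"

definition nbhd :: "'a graph \<Rightarrow> 'a \<Rightarrow> 'a set" where
  "nbhd G v = {u. (v, u) \<in> edges G}"

definition subgraph :: "'a graph \<Rightarrow> 'a graph \<Rightarrow> bool" where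
  "subgraph H G \<longleftrightarrow> wf_graph H \<and> verts H \<subseteq> verts G \<and> edges H \<subseteq> edges G"

definition graph_iso :: "'b graph \<Rightarrow> 'a graph \<Rightarrow> ('b \<Rightarrow> 'a) \<Rightarrow> bool" where
  "graph_iso F H f \<longleftrightarrow> bij_betw f (verts F) (verts H)
     \<and> (\<forall>u\<in>verts F. \<forall>v\<in>verts F. (u, v) \<in> edges F \<longleftrightarrow> (f u, f v) \<in> edges H)"

definition isomorphic :: "'b graph \<Rightarrow> 'a graph \<Rightarrow> bool" where
  "isomorphic F H \<longleftrightarrow> (\<exists>f. graph_iso F H f)"

definition triangle_free :: "'a graph \<Rightarrow> bool" where
  "triangle_free G \<longleftrightarrow>
     \<not> (\<exists>a b c. (a, b) \<in> edges G \<and> (b, c) \<in> edges G \<and> (a, c) \<in> edges G)"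

definition add_edge :: "'a graph \<Rightarrow> 'a \<Rightarrow> 'a \<Rightarrow> 'a graph" where
  "add_edge G u v = (verts G, edges G \<union> {(u, v), (v, u)})"

definition maximal_triangle_free :: "'a graph \<Rightarrow> bool" where
  "maximal_triangle_free G \<longleftrightarrow> wf_graph G \<and> triangle_free G \<and>
     (\<forall>u\<in>verts G. \<forall>v\<in>verts G. u \<noteq> v \<and> (u, v) \<notin> edges G
        \<longrightarrow> \<not> triangle_free (add_edge G u v))"

definition H_twin :: "'a graph \<Rightarrow> 'a graph \<Rightarrow> 'a \<Rightarrow> 'a \<Rightarrow> bool" where
  "H_twin G H q q' \<longleftrightarrow> q \<in> verts H \<and> q' \<in> verts G \<and>
     nbhd G q \<inter> verts H = nbhd G q' \<inter> verts H"

text \<open>H(q'): delete q from H and add q' with all G-edges between q' and V(H) - {q}.\<close>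
definition twin_replace :: "'a graph \<Rightarrow> 'a graph \<Rightarrow> 'a \<Rightarrow> 'a \<Rightarrow> 'a graph" where
  "twin_replace G H q q' =
     (verts H - {q} \<union> {q'},
      {(a, b) \<in> edges H. a \<noteq> q \<and> b \<noteq> q}
      \<union> {(a, b) \<in> edges G. (a = q' \<and> b \<in> verts H - {q}) \<or> (b = q' \<and> a \<in> verts H - {q})})"

definition twin_property_edge :: "'b graph \<Rightarrow> 'a graph \<Rightarrow> 'b \<Rightarrow> 'b \<Rightarrow> bool" where
  "twin_property_edge F G a b \<longleftrightarrow>
     (\<forall>H f q z q' z'. subgraph H G \<longrightarrow> graph_iso F H f \<longrightarrow> {q, z} = {f a, f b}
        \<longrightarrow> H_twin G H q q' \<longrightarrow> H_twin G H z z' \<longrightarrow> (q', z') \<in> edges G)"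

definition twin_property :: "'b graph \<Rightarrow> 'a graph \<Rightarrow> bool" where
  "twin_property F G \<longleftrightarrow> (\<forall>(a, b) \<in> edges F. twin_property_edge F G a b)"

end

theory Submission
  imports Defs
begin

text \<open>
  Since G is triangle-free and H is a copy of the maximal triangle-free graph F, H is an
  induced subgraph of G: a G-edge missing from H would close a triangle with a common
  neighbour of its ends in H. Hence H(z') is again a copy of F, in which z is a twin of z',
  and q' agrees with q on V(H) - {z}. It remains to compare q and q' at z. If qz is an edge,
  so is qz' in H(z'), and the twin property for H(z') yields the edge q'z. If it is not,
  q and z have a common neighbour w \<noteq> z in H, which q' also sees, so an edge q'z would
  close the triangle q'zw.
\<close>

lemma wf_graph_edge_sym: "wf_graph G \<Longrightarrow> (a, b) \<in> edges G \<Longrightarrow> (b, a) \<in> edges G"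
  unfolding wf_graph_def by (meson symD)

lemma wf_graph_edge_irrefl: "wf_graph G \<Longrightarrow> (a, a) \<notin> edges G"
  unfolding wf_graph_def irrefl_def by blast

lemma wf_graph_edge_verts: "wf_graph G \<Longrightarrow> (a, b) \<in> edges G \<Longrightarrow> a \<in> verts G \<and> b \<in> verts G"
  unfolding wf_graph_def by blast

lemma maximal_triangle_free_common_neighbour:
  assumes "maximal_triangle_free F" "u \<in> verts F" "v \<in> verts F" "u \<noteq> v" "(u, v) \<notin> edges F"
  shows "\<exists>w. (u, w) \<in> edges F \<and> (v, w) \<in> edges F"
proof -
  have tf: "triangle_free F" and "sym (edges F)" and "irrefl (edges F)"
    and "\<not> triangle_free (add_edge F u v)"
    using assms unfolding maximal_triangle_free_def wf_graph_def by auto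
  then obtain a b c where "(a, b) \<in> edges F \<union> {(u, v), (v, u)}" "(b, c) \<in> edges F \<union> {(u, v), (v, u)}"
      "(a, c) \<in> edges F \<union> {(u, v), (v, u)}"
    unfolding triangle_free_def add_edge_def by auto
  with tf \<open>sym (edges F)\<close> \<open>irrefl (edges F)\<close> \<open>u \<noteq> v\<close> show ?thesis
    unfolding triangle_free_def sym_def irrefl_def by blast
qed

lemma graph_iso_edge_iff:
  "graph_iso F H f \<Longrightarrow> u \<in> verts F \<Longrightarrow> v \<in> verts F \<Longrightarrow> (f u, f v) \<in> edges H \<longleftrightarrow> (u, v) \<in> edges F"
  unfolding graph_iso_def by blast

lemma graph_iso_apply: "graph_iso F H f \<Longrightarrow> u \<in> verts F \<Longrightarrow> f u \<in> verts H"
  unfolding graph_iso_def by (meson bij_betw_apply)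

lemma graph_iso_obtain_preimage:
  assumes "graph_iso F H f" "x \<in> verts H"
  obtains u where "u \<in> verts F" "f u = x"
  using assms unfolding graph_iso_def bij_betw_def by (metis imageE)

lemma graph_iso_common_neighbour:
  assumes "maximal_triangle_free F" "graph_iso F H f"
    and "a \<in> verts H" "b \<in> verts H" "a \<noteq> b" "(a, b) \<notin> edges H"
  shows "\<exists>w \<in> verts H. (a, w) \<in> edges H \<and> (b, w) \<in> edges H"
proof -
  obtain u where u: "u \<in> verts F" "f u = a"
    using assms(2,3) by (rule graph_iso_obtain_preimage)
  obtain v where v: "v \<in> verts F" "f v = b"
    using assms(2,4) by (rule graph_iso_obtain_preimage)
  have "u \<noteq> v"
    using u v assms(5) by blast
  moreover have "(u, v) \<notin> edges F"
    using graph_iso_edge_iff[OF assms(2) u(1) v(1)] u(2) v(2) assms(6) by simp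
  ultimately obtain w where w: "(u, w) \<in> edges F" "(v, w) \<in> edges F"
    using maximal_triangle_free_common_neighbour[OF assms(1) u(1) v(1)] by blast
  have "wf_graph F"
    using assms(1) unfolding maximal_triangle_free_def by blast
  then have wF: "w \<in> verts F"
    using wf_graph_edge_verts[OF _ w(1)] by blast
  then have "f w \<in> verts H"
    by (rule graph_iso_apply[OF assms(2)])
  moreover have "(a, f w) \<in> edges H"
    using graph_iso_edge_iff[OF assms(2) u(1) wF] u(2) w(1) by simp
  moreover have "(b, f w) \<in> edges H"
    using graph_iso_edge_iff[OF assms(2) v(1) wF] v(2) w(2) by simp
  ultimately show ?thesis by blast
qed

definition induced_subgraph :: "'a graph \<Rightarrow> 'a graph \<Rightarrow> bool" where
  "induced_subgraph H G \<longleftrightarrow> subgraph H G \<and>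
     (\<forall>a \<in> verts H. \<forall>b \<in> verts H. (a, b) \<in> edges G \<longrightarrow> (a, b) \<in> edges H)"

lemma induced_subgraph_if_iso_maximal_triangle_free:
  assumes "maximal_triangle_free F" "graph_iso F H f" "triangle_free G" "subgraph H G"
  shows "induced_subgraph H G"
  unfolding induced_subgraph_def
proof (intro conjI ballI impI assms(4))
  fix a b assume ab: "a \<in> verts H" "b \<in> verts H" "(a, b) \<in> edges G"
  show "(a, b) \<in> edges H"
  proof (rule ccontr)
    assume "(a, b) \<notin> edges H"
    moreover have "a \<noteq> b" \<comment> \<open>a loop would be a degenerate triangle\<close>
      using ab(3) assms(3) unfolding triangle_free_def by blast
    ultimately obtain w where "(a, w) \<in> edges H" "(b, w) \<in> edges H"
      using graph_iso_common_neighbour[OF assms(1,2) ab(1,2)] by blast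
    with ab(3) assms(3,4) show False
      unfolding subgraph_def triangle_free_def by blast
  qed
qed

lemma H_twin_edge_iff:
  "H_twin G H q q' \<Longrightarrow> x \<in> verts H \<Longrightarrow> (q, x) \<in> edges G \<longleftrightarrow> (q', x) \<in> edges G"
  unfolding H_twin_def nbhd_def by blast

lemma H_twinI:
  assumes "q \<in> verts H" "q' \<in> verts G"
    and "\<And>x. x \<in> verts H \<Longrightarrow> (q, x) \<in> edges G \<longleftrightarrow> (q', x) \<in> edges G"
  shows "H_twin G H q q'"
  using assms unfolding H_twin_def nbhd_def by blast

lemma verts_twin_replace: "verts (twin_replace G H z z') = verts H - {z} \<union> {z'}"
  unfolding twin_replace_def by simp

lemma edges_twin_replace:
  "edges (twin_replace G H z z') = {(a, b) \<in> edges H. a \<noteq> z \<and> b \<noteq> z}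
     \<union> {(a, b) \<in> edges G. (a = z' \<and> b \<in> verts H - {z}) \<or> (b = z' \<and> a \<in> verts H - {z})}"
  unfolding twin_replace_def by simp

lemma subgraph_twin_replace:
  assumes "wf_graph G" "subgraph H G" "z' \<in> verts G"
  shows "subgraph (twin_replace G H z z') G"
proof -
  have H: "finite (verts H)" "edges H \<subseteq> verts H \<times> verts H" "sym (edges H)"
      "verts H \<subseteq> verts G" "edges H \<subseteq> edges G"
    using assms(2) unfolding subgraph_def wf_graph_def by auto
  have G: "sym (edges G)" "irrefl (edges G)"
    using assms(1) unfolding wf_graph_def by auto
  let ?H' = "twin_replace G H z z'"
  have "finite (verts ?H')"
    using H(1) by (simp add: verts_twin_replace)
  moreover have "edges ?H' \<subseteq> verts ?H' \<times> verts ?H'"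
    using H(2) unfolding verts_twin_replace edges_twin_replace by auto
  moreover have "sym (edges ?H')"
    using H(3) G(1) unfolding edges_twin_replace sym_def by auto
  moreover have "irrefl (edges ?H')"
    using H(5) G(2) unfolding edges_twin_replace irrefl_def by auto
  moreover have "verts ?H' \<subseteq> verts G"
    using H(4) assms(3) unfolding verts_twin_replace by auto
  moreover have "edges ?H' \<subseteq> edges G"
    using H(5) unfolding edges_twin_replace by auto
  ultimately show ?thesis
    unfolding subgraph_def wf_graph_def by simp
qed

lemma bij_betw_fun_upd_id:
  assumes "z \<in> A" "z' \<notin> A"
  shows "bij_betw (id(z := z')) A (A - {z} \<union> {z'})"
  using assms unfolding bij_betw_def inj_on_def by auto

text \<open>Here inducedness is needed: edges at z' in H(z') come from G, edges at z in H do not.\<close>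
lemma twin_replace_edge_iff:
  assumes "wf_graph G" "induced_subgraph H G" "H_twin G H z z'" "z' \<notin> verts H"
    and "a \<in> verts H" "b \<in> verts H"
  shows "((id(z := z')) a, (id(z := z')) b) \<in> edges (twin_replace G H z z')
    \<longleftrightarrow> (a, b) \<in> edges H"
proof -
  have "wf_graph H" and sub: "edges H \<subseteq> edges G"
    and induced: "\<And>x y. x \<in> verts H \<Longrightarrow> y \<in> verts H \<Longrightarrow> (x, y) \<in> edges G \<Longrightarrow> (x, y) \<in> edges H"
    using assms(2) unfolding induced_subgraph_def subgraph_def by auto
  have "z \<in> verts H"
    using assms(3) unfolding H_twin_def by blast
  have twin: "(z', x) \<in> edges G \<longleftrightarrow> (z, x) \<in> edges H" if "x \<in> verts H" for x
    using H_twin_edge_iff[OF assms(3) that] induced[OF \<open>z \<in> verts H\<close> that] sub by blast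
  have twin': "(x, z') \<in> edges G \<longleftrightarrow> (x, z) \<in> edges H" if "x \<in> verts H" for x
    using twin[OF that] wf_graph_edge_sym[OF assms(1)] wf_graph_edge_sym[OF \<open>wf_graph H\<close>] by blast
  have "(z', x) \<notin> edges H" "(x, z') \<notin> edges H" for x
    using assms(4) wf_graph_edge_verts[OF \<open>wf_graph H\<close>] by blast+
  moreover have "(z', z') \<notin> edges (twin_replace G H z z')" "(z, z) \<notin> edges H"
    using wf_graph_edge_irrefl[OF assms(1)] sub unfolding edges_twin_replace by auto
  ultimately show ?thesis
    using assms(4-6) twin twin' unfolding edges_twin_replace by auto
qed

lemma graph_iso_twin_replace:
  assumes "wf_graph G" "graph_iso F H f" "induced_subgraph H G" "H_twin G H z z'" "z' \<notin> verts H"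
  shows "graph_iso F (twin_replace G H z z') (id(z := z') \<circ> f)"
  unfolding graph_iso_def
proof (intro conjI ballI)
  have "z \<in> verts H"
    using assms(4) unfolding H_twin_def by blast
  then have "bij_betw (id(z := z')) (verts H) (verts H - {z} \<union> {z'})"
    using assms(5) by (rule bij_betw_fun_upd_id)
  moreover have "bij_betw f (verts F) (verts H)"
    using assms(2) unfolding graph_iso_def by blast
  ultimately show "bij_betw (id(z := z') \<circ> f) (verts F) (verts (twin_replace G H z z'))"
    unfolding verts_twin_replace by (blast intro: bij_betw_trans)
next
  fix u v assume "u \<in> verts F" "v \<in> verts F"
  then show "(u, v) \<in> edges F
      \<longleftrightarrow> ((id(z := z') \<circ> f) u, (id(z := z') \<circ> f) v) \<in> edges (twin_replace G H z z')"
    using twin_replace_edge_iff[OF assms(1,3-5) graph_iso_apply[OF assms(2)] graph_iso_apply[OF assms(2)]]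
      graph_iso_edge_iff[OF assms(2)] by simp
qed

lemma H_twin_twin_replace_swap:
  assumes "wf_graph G" "subgraph H G" "H_twin G H z z'"
  shows "H_twin G (twin_replace G H z z') z' z"
proof (rule H_twinI)
  have "z \<in> verts H"
    using assms(3) unfolding H_twin_def by blast
  then show "z \<in> verts G"
    using assms(2) unfolding subgraph_def by blast
  have "(z, z') \<notin> edges G"
    using H_twin_edge_iff[OF assms(3) \<open>z \<in> verts H\<close>] wf_graph_edge_irrefl[OF assms(1)]
      wf_graph_edge_sym[OF assms(1)] by blast
  then show "(z', x) \<in> edges G \<longleftrightarrow> (z, x) \<in> edges G" if "x \<in> verts (twin_replace G H z z')" for x
    using that H_twin_edge_iff[OF assms(3)] wf_graph_edge_irrefl[OF assms(1)]
    unfolding verts_twin_replace by blast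
qed (simp add: verts_twin_replace)

lemma twin_property_adjacent:
  assumes "twin_property F G" "subgraph H G" "graph_iso F H f"
    and "(q, z) \<in> edges H" "H_twin G H q q'" "H_twin G H z z'"
  shows "(q', z') \<in> edges G"
proof -
  have "q \<in> verts H" "z \<in> verts H"
    using assms(5,6) unfolding H_twin_def by blast+
  then obtain u v where u: "u \<in> verts F" "f u = q" and v: "v \<in> verts F" "f v = z"
    using graph_iso_obtain_preimage[OF assms(3)] by metis
  then have "(u, v) \<in> edges F"
    using graph_iso_edge_iff[OF assms(3) u(1) v(1)] assms(4) by simp
  then have "twin_property_edge F G u v"
    using assms(1) unfolding twin_property_def by blast
  with assms(2,3,5,6) u v show ?thesis
    unfolding twin_property_edge_def by blast
qed

lemma twin_replace_twin_adjacent: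
  assumes "twin_property F G" "wf_graph G" "graph_iso F H f" "induced_subgraph H G"
    and "z' \<in> verts G - verts H" "H_twin G H z z'" "q \<noteq> z" "(q, z) \<in> edges H"
    and "H_twin G (twin_replace G H z z') q q'"
  shows "(q', z) \<in> edges G"
proof -
  let ?H' = "twin_replace G H z z'"
  have z': "z' \<in> verts G" "z' \<notin> verts H"
    using assms(5) by auto
  have "subgraph H G"
    using assms(4) unfolding induced_subgraph_def by blast
  then have "q \<in> verts H" "z \<in> verts H"
    using wf_graph_edge_verts[OF _ assms(8)] unfolding subgraph_def by blast+
  have "(q, z') \<in> edges ?H'"
    using twin_replace_edge_iff[OF assms(2,4,6) z'(2) \<open>q \<in> verts H\<close> \<open>z \<in> verts H\<close>] assms(7,8)
    by simp
  moreover have "subgraph ?H' G"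
    by (rule subgraph_twin_replace[OF assms(2) \<open>subgraph H G\<close> z'(1)])
  moreover have "graph_iso F ?H' (id(z := z') \<circ> f)"
    by (rule graph_iso_twin_replace[OF assms(2-4,6) z'(2)])
  moreover have "H_twin G ?H' z' z"
    by (rule H_twin_twin_replace_swap[OF assms(2) \<open>subgraph H G\<close> assms(6)])
  ultimately show ?thesis
    using twin_property_adjacent[OF assms(1) _ _ _ assms(9)] by blast
qed

lemma partial_twin_nonadjacent:
  assumes "maximal_triangle_free F" "graph_iso F H f" "triangle_free G" "subgraph H G"
    and "q \<in> verts H" "z \<in> verts H" "q \<noteq> z" "(q, z) \<notin> edges G"
    and "\<And>x. x \<in> verts H - {z} \<Longrightarrow> (q, x) \<in> edges G \<Longrightarrow> (q', x) \<in> edges G"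
  shows "(q', z) \<notin> edges G"
proof
  assume q'z: "(q', z) \<in> edges G"
  have "edges H \<subseteq> edges G"
    using assms(4) unfolding subgraph_def by blast
  then obtain w where w: "w \<in> verts H" "(q, w) \<in> edges G" "(z, w) \<in> edges G"
    using graph_iso_common_neighbour[OF assms(1,2,5,6,7)] assms(8) by blast
  moreover have "w \<noteq> z"
    using w(3) assms(3) unfolding triangle_free_def by blast
  ultimately have "(q', w) \<in> edges G"
    using assms(9) by blast
  with q'z w(3) assms(3) show False
    unfolding triangle_free_def by blast
qed

theorem lemma2p3:
  fixes F :: "'b graph" and G H H' :: "'a graph"
  assumes "maximal_triangle_free F"
    and "wf_graph G" and "triangle_free G" and "twin_property F G"
    and "subgraph H G" and "isomorphic F H"
    and "z \<in> verts H" and "z' \<in> verts G - verts H" and "H_twin G H z z'"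
    and "H' = twin_replace G H z z'"
    and "q \<in> verts H - {z}" and "H_twin G H' q q'"
  shows "H_twin G H q q'"
proof -
  obtain f where f: "graph_iso F H f"
    using assms(6) unfolding isomorphic_def by blast
  have induced: "induced_subgraph H G"
    using induced_subgraph_if_iso_maximal_triangle_free[OF assms(1) f assms(3,5)] .
  have q: "q \<in> verts H" "q \<noteq> z"
    using assms(11) by auto
  have off_z: "(q, x) \<in> edges G \<longleftrightarrow> (q', x) \<in> edges G" if "x \<in> verts H - {z}" for x
    using H_twin_edge_iff[OF assms(12)] that unfolding assms(10) verts_twin_replace by blast
  have "(q, z) \<in> edges G \<longleftrightarrow> (q', z) \<in> edges G"
  proof
    assume "(q, z) \<in> edges G"
    then have "(q, z) \<in> edges H"
      using induced q(1) assms(7) unfolding induced_subgraph_def by blast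
    then show "(q', z) \<in> edges G"
      using twin_replace_twin_adjacent[OF assms(4,2) f induced assms(8,9) q(2)] assms(12)
      unfolding assms(10) by blast
  next
    assume "(q', z) \<in> edges G"
    then show "(q, z) \<in> edges G"
      using partial_twin_nonadjacent[OF assms(1) f assms(3,5) q(1) assms(7) q(2)] off_z by blast
  qed
  moreover have "q' \<in> verts G"
    using assms(12) unfolding H_twin_def by blast
  ultimately show ?thesis
    using off_z by (intro H_twinI[OF q(1)]) auto
qed

end
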